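(* Suppose $F$ satisfies the symmetry condition $F(p+\phi^0)=F(p-\phi^0)$ for all $p\in\operatorname{span}\{\phi^1,\dots,\phi^n\}$. Then there is a constant $C_2$ depending only on $F$ such that $$F(p-\phi^0)\,D^2F|_{p-\phi^0}(p,q)\le C_2\,\frac{F(q)}{F(p-\phi^0)}$$ for all $p,q\in\operatorname{span}\{\phi^1,\dots,\phi^n\}$.
   Context: $V^*\cong\mathbb{R}^{n+1}$ has a basis $\phi^0,\dots,\phi^n$. $F:V^*\to\mathbb{R}$ is positive on $V^*\setminus\{0\}$, convex, $C^3$ on $V^*\setminus\{0\}$, homogeneous of degree one, with uniformly convex sublevel sets. $D^2F|_\nu$ denotes the Hessian of $F$ at $\nu$ as a symmetric bilinear form. *)

theory Defs
  imports "HOL-Analysis.Analysis"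
begin

definition D1 :: "('a::real_normed_vector \<Rightarrow> real) \<Rightarrow> 'a \<Rightarrow> 'a \<Rightarrow> real" where
  "D1 F x u = frechet_derivative F (at x) u"

definition D2 :: "('a::real_normed_vector \<Rightarrow> real) \<Rightarrow> 'a \<Rightarrow> 'a \<Rightarrow> 'a \<Rightarrow> real" where
  "D2 F x u v = frechet_derivative (\<lambda>y. D1 F y u) (at x) v"

definition D3 :: "('a::real_normed_vector \<Rightarrow> real) \<Rightarrow> 'a \<Rightarrow> 'a \<Rightarrow> 'a \<Rightarrow> 'a \<Rightarrow> real" where
  "D3 F x u v w = frechet_derivative (\<lambda>y. D2 F y u v) (at x) w"

definition C3_on :: "'a::real_normed_vector set \<Rightarrow> ('a \<Rightarrow> real) \<Rightarrow> bool" where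
  "C3_on S F \<longleftrightarrow> open S \<and>
     (\<forall>x\<in>S. F differentiable (at x)) \<and>
     (\<forall>x\<in>S. \<forall>u. (\<lambda>y. D1 F y u) differentiable (at x)) \<and>
     (\<forall>x\<in>S. \<forall>u v. (\<lambda>y. D2 F y u v) differentiable (at x)) \<and>
     (\<forall>u v w. continuous_on S (\<lambda>y. D3 F y u v w))"

definition uniformly_convex_set :: "'a::real_normed_vector set \<Rightarrow> bool" where
  "uniformly_convex_set K \<longleftrightarrow> convex K \<and>
     (\<exists>c>0. \<forall>x\<in>K. \<forall>y\<in>K. cball ((1/2) *\<^sub>R (x + y)) (c * (norm (x - y))\<^sup>2) \<subseteq> K)"

end

theory Submission
  imports Defs
begin

text \<open>
  Write a = phi 0 and V = span {phi 1, ..., phi n}. Euler's relation gives D2 F x x = 0,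
  so for x = p - a the term D2 F x p q equals D2 F x a q; as D2 F is homogeneous of
  degree -1, rescaling x to the level set F = 1 turns the left-hand side into D2 F y a q
  with y = u - s a, u in V and s = 1 / F x. The symmetry makes F even along every line
  u + t a (u in V), so D1 F . a vanishes on V and hence D2 F u a q = 0 for q in V.
  If F u \<ge> 1/2 the segment from u to y stays in the compact annulus 1/2 \<le> F \<le> 1, and
  the mean value theorem with a bound on D3 F there gives |D2 F y a q| \<le> K s |q|.
  Otherwise 1 \<le> F u + s F (-a) forces s \<ge> 1 / (2 F (-a)), and a bound on D2 F over the
  annulus suffices. Finally |q| \<le> F q / m.
\<close>

lemma C3_on_has_derivative_D1:
  assumes "C3_on S F" "x \<in> S"
  shows "(F has_derivative D1 F x) (at x)"
  using assms unfolding C3_on_def D1_def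
  by (auto intro!: frechet_derivative_works[THEN iffD1] ext)

lemma C3_on_has_derivative_D2:
  assumes "C3_on S F" "x \<in> S"
  shows "((\<lambda>y. D1 F y u) has_derivative D2 F x u) (at x)"
  using assms unfolding C3_on_def D2_def
  by (auto intro!: frechet_derivative_works[THEN iffD1] ext)

lemma C3_on_has_derivative_D3:
  assumes "C3_on S F" "x \<in> S"
  shows "((\<lambda>y. D2 F y u v) has_derivative D3 F x u v) (at x)"
  using assms unfolding C3_on_def D3_def
  by (auto intro!: frechet_derivative_works[THEN iffD1] ext)

lemma linear_D1: "C3_on S F \<Longrightarrow> x \<in> S \<Longrightarrow> linear (D1 F x)"
  using C3_on_has_derivative_D1 has_derivative_linear by blast

lemma linear_D2: "C3_on S F \<Longrightarrow> x \<in> S \<Longrightarrow> linear (D2 F x u)"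
  using C3_on_has_derivative_D2 has_derivative_linear by blast

lemma continuous_on_D2: "C3_on S F \<Longrightarrow> continuous_on S (\<lambda>y. D2 F y u v)"
  using C3_on_has_derivative_D3 has_derivative_continuous
  by (blast intro: continuous_at_imp_continuous_on)

lemma continuous_on_D3: "C3_on S F \<Longrightarrow> continuous_on S (\<lambda>y. D3 F y u v w)"
  unfolding C3_on_def by blast

lemma linear_has_derivative_param:
  assumes "open S" "x \<in> S" "\<And>y. y \<in> S \<Longrightarrow> linear (f y)"
    and der: "\<And>q. ((\<lambda>y. f y q) has_derivative g q) (at x)"
  shows "linear (\<lambda>q. g q v)"
proof (rule linearI)
  fix q r :: 'b and c :: real
  have "((\<lambda>y. f y (q + r)) has_derivative (\<lambda>h. g q h + g r h)) (at x)"
    using has_derivative_add[OF der[of q] der[of r]]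
    by (rule has_derivative_transform_within_open[OF _ assms(1,2)])
       (simp add: assms(3) linear_add)
  from has_derivative_unique[OF der this] show "g (q + r) v = g q v + g r v" by metis
  have "((\<lambda>y. f y (c *\<^sub>R q)) has_derivative (\<lambda>h. c *\<^sub>R g q h)) (at x)"
    using has_derivative_scaleR_right[OF der[of q], of c]
    by (rule has_derivative_transform_within_open[OF _ assms(1,2)])
       (simp add: assms(3) linear_scale)
  from has_derivative_unique[OF der this] show "g (c *\<^sub>R q) v = c *\<^sub>R g q v" by simp
qed

lemma linear_D2_first:
  "C3_on S F \<Longrightarrow> x \<in> S \<Longrightarrow> linear (\<lambda>u. D2 F x u v)"
  by (rule linear_has_derivative_param[where f = "D1 F"])
     (auto simp: C3_on_def intro: linear_D1 C3_on_has_derivative_D2)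

lemma linear_D3_second:
  "C3_on S F \<Longrightarrow> x \<in> S \<Longrightarrow> linear (\<lambda>q. D3 F x w q v)"
  by (rule linear_has_derivative_param[where f = "\<lambda>y. D2 F y w"])
     (auto simp: C3_on_def intro: linear_D2 C3_on_has_derivative_D3)

lemma linear_real_basis_expansion:
  fixes f :: "'a::euclidean_space \<Rightarrow> real"
  shows "linear f \<Longrightarrow> f x = (\<Sum>b\<in>Basis. (x \<bullet> b) * f b)"
  using Linear_Algebra.linear_componentwise[of f x 1] by simp

lemma C3_on_has_derivative_D1_diagonal:
  fixes F :: "'a::euclidean_space \<Rightarrow> real"
  assumes "C3_on S F" "x \<in> S"
  shows "((\<lambda>y. D1 F y y) has_derivative (\<lambda>v. D2 F x x v + D1 F x v)) (at x)"
proof -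
  have expand: "D1 F y y = (\<Sum>b\<in>Basis. (y \<bullet> b) * D1 F y b)" if "y \<in> S" for y
    using linear_D1[OF assms(1) that]
    by (rule linear_real_basis_expansion)
  have "((\<lambda>y. \<Sum>b\<in>Basis. (y \<bullet> b) * D1 F y b) has_derivative
        (\<lambda>v. \<Sum>b\<in>Basis. (x \<bullet> b) * D2 F x b v + (v \<bullet> b) * D1 F x b)) (at x)"
    using C3_on_has_derivative_D2[OF assms] by (intro derivative_eq_intros) auto
  moreover have "(\<lambda>v. \<Sum>b\<in>Basis. (x \<bullet> b) * D2 F x b v + (v \<bullet> b) * D1 F x b)
    = (\<lambda>v. D2 F x x v + D1 F x v)"
  proof
    fix v
    have "D2 F x x v = (\<Sum>b\<in>Basis. (x \<bullet> b) * D2 F x b v)"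
      using linear_D2_first[OF assms, of v]
      by (rule linear_real_basis_expansion)
    moreover have "D1 F x v = (\<Sum>b\<in>Basis. (v \<bullet> b) * D1 F x b)"
      using linear_D1[OF assms]
      by (rule linear_real_basis_expansion)
    ultimately show "(\<Sum>b\<in>Basis. (x \<bullet> b) * D2 F x b v + (v \<bullet> b) * D1 F x b) = D2 F x x v + D1 F x v"
      by (simp add: sum.distrib)
  qed
  moreover have "open S"
    using assms(1) by (simp add: C3_on_def)
  ultimately show ?thesis
    using assms(2) expand by (metis (no_types, lifting) has_derivative_transform_within_open)
qed

locale positively_homogeneous_C3 =
  fixes F :: "'a::euclidean_space \<Rightarrow> real"
  assumes smooth: "C3_on (UNIV - {0}) F"
    and hom: "\<forall>t x. t > 0 \<longrightarrow> F (t *\<^sub>R x) = t * F x"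
begin

lemma F_zero: "F 0 = 0"
  using hom[rule_format, of 2 0] by simp

lemma has_derivative_D1: "x \<noteq> 0 \<Longrightarrow> (F has_derivative D1 F x) (at x)"
  by (simp add: C3_on_has_derivative_D1[OF smooth])

lemma has_derivative_D2: "x \<noteq> 0 \<Longrightarrow> ((\<lambda>y. D1 F y u) has_derivative D2 F x u) (at x)"
  by (simp add: C3_on_has_derivative_D2[OF smooth])

lemma euler: assumes "x \<noteq> 0" shows "D1 F x x = F x"
proof -
  have "((\<lambda>t::real. t *\<^sub>R x) has_derivative (\<lambda>h. h *\<^sub>R x)) (at 1)"
    by (intro derivative_eq_intros) auto
  from has_derivative_compose[OF this, of F "D1 F x"]
  have "((\<lambda>t. F (t *\<^sub>R x)) has_derivative (\<lambda>h. D1 F x (h *\<^sub>R x))) (at 1)"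
    using has_derivative_D1[OF assms] by simp
  then have "((\<lambda>t. t * F x) has_derivative (\<lambda>h. D1 F x (h *\<^sub>R x))) (at 1)"
    by (rule has_derivative_transform_within_open[where s = "{0<..}"]) (use hom in auto)
  moreover have "((\<lambda>t. t * F x) has_derivative (\<lambda>h. h * F x)) (at 1)"
    by (intro derivative_eq_intros) auto
  ultimately have "(\<lambda>h. D1 F x (h *\<^sub>R x)) = (\<lambda>h. h * F x)"
    by (rule has_derivative_unique)
  then show ?thesis by (metis mult_1 scaleR_one)
qed

text \<open>Differentiate Euler's identity D1 F y y = F y at x.\<close>
lemma D2_self: assumes "x \<noteq> 0" shows "D2 F x x v = 0"
proof -
  have "((\<lambda>y. D1 F y y) has_derivative (\<lambda>v. D2 F x x v + D1 F x v)) (at x)"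
    using C3_on_has_derivative_D1_diagonal[OF smooth] assms by simp
  then have "(F has_derivative (\<lambda>v. D2 F x x v + D1 F x v)) (at x)"
    by (rule has_derivative_transform_within_open[where s = "UNIV - {0}"])
       (use assms euler in auto)
  from has_derivative_unique[OF has_derivative_D1[OF assms] this] show ?thesis
    by (metis add_cancel_right_left)
qed

lemma D1_scaleR: assumes "c > 0" "x \<noteq> 0" shows "D1 F (c *\<^sub>R x) = D1 F x"
proof -
  have cx: "c *\<^sub>R x \<noteq> 0" using assms by auto
  have "((\<lambda>y. c *\<^sub>R y) has_derivative (\<lambda>h. c *\<^sub>R h)) (at x)"
    by (intro derivative_eq_intros) auto
  from has_derivative_compose[OF this has_derivative_D1[OF cx]]
  have "((\<lambda>y. F (c *\<^sub>R y)) has_derivative (\<lambda>h. D1 F (c *\<^sub>R x) (c *\<^sub>R h))) (at x)" .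
  moreover have "((\<lambda>y. F (c *\<^sub>R y)) has_derivative (\<lambda>h. c * D1 F x h)) (at x)"
    using has_derivative_mult_right[OF has_derivative_D1[OF assms(2)], of c] hom assms(1)
    by simp
  ultimately have "(\<lambda>h. D1 F (c *\<^sub>R x) (c *\<^sub>R h)) = (\<lambda>h. c * D1 F x h)"
    by (rule has_derivative_unique)
  moreover have "D1 F (c *\<^sub>R x) (c *\<^sub>R h) = c * D1 F (c *\<^sub>R x) h" for h
    using linear_D1[OF smooth, of "c *\<^sub>R x"] cx by (simp add: linear_scale)
  ultimately have "c * D1 F (c *\<^sub>R x) h = c * D1 F x h" for h
    by metis
  then show ?thesis
    using assms(1) by auto
qed

lemma D2_scaleR: assumes "c > 0" "x \<noteq> 0" shows "D2 F (c *\<^sub>R x) u v = D2 F x u v / c"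
proof -
  have cx: "c *\<^sub>R x \<noteq> 0" using assms by auto
  have "((\<lambda>y. c *\<^sub>R y) has_derivative (\<lambda>h. c *\<^sub>R h)) (at x)"
    by (intro derivative_eq_intros) auto
  from has_derivative_compose[OF this has_derivative_D2[OF cx]]
  have "((\<lambda>y. D1 F y u) has_derivative (\<lambda>h. D2 F (c *\<^sub>R x) u (c *\<^sub>R h))) (at x)"
    by (rule has_derivative_transform_within_open[where s = "UNIV - {0}"])
       (use assms D1_scaleR in auto)
  from has_derivative_unique[OF has_derivative_D2[OF assms(2)] this]
  have "D2 F x u v = D2 F (c *\<^sub>R x) u (c *\<^sub>R v)" by metis
  also have "\<dots> = c * D2 F (c *\<^sub>R x) u v"
    using linear_D2[OF smooth, of "c *\<^sub>R x"] cx by (simp add: linear_scale)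
  finally show ?thesis using assms(1) by auto
qed

end

lemma uniform_linear_bound_on_compact:
  fixes G :: "'z::topological_space \<Rightarrow> 'a::euclidean_space \<Rightarrow> real"
  assumes "compact A" "\<And>b. continuous_on A (\<lambda>z. G z b)" "\<And>z. z \<in> A \<Longrightarrow> linear (G z)"
  shows "\<exists>K\<ge>0. \<forall>z\<in>A. \<forall>q. \<bar>G z q\<bar> \<le> K * norm q"
proof -
  have "continuous_on A (\<lambda>z. \<Sum>b\<in>Basis. \<bar>G z b\<bar>)"
    using assms(2) by (intro continuous_intros)
  then have "bounded ((\<lambda>z. \<Sum>b\<in>Basis. \<bar>G z b\<bar>) ` A)"
    by (rule compact_imp_bounded[OF compact_continuous_image[OF _ assms(1)]])
  then obtain K where "\<forall>y\<in>(\<lambda>z. \<Sum>b\<in>Basis. \<bar>G z b\<bar>) ` A. norm y \<le> K"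
    unfolding bounded_iff by blast
  then have K: "(\<Sum>b\<in>Basis. \<bar>G z b\<bar>) \<le> K" if "z \<in> A" for z
    using that by (auto dest: abs_le_D1)
  have "\<bar>G z q\<bar> \<le> max K 0 * norm q" if "z \<in> A" for z q
  proof -
    have "\<bar>G z q\<bar> = \<bar>\<Sum>b\<in>Basis. (q \<bullet> b) * G z b\<bar>"
      using linear_real_basis_expansion[OF assms(3)[OF that]] by metis
    also have "\<dots> \<le> (\<Sum>b\<in>Basis. norm q * \<bar>G z b\<bar>)"
      by (rule order_trans[OF sum_abs sum_mono])
         (simp add: abs_mult Basis_le_norm mult_right_mono)
    also have "\<dots> \<le> norm q * max K 0"
      using K[OF that] by (simp add: sum_distrib_left[symmetric] mult_left_mono)
    finally show ?thesis by (simp only: mult.commute)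
  qed
  then show ?thesis by (metis max.cobounded2)
qed

locale C3_gauge = positively_homogeneous_C3 +
  assumes pos: "\<forall>x. x \<noteq> 0 \<longrightarrow> F x > 0"
    and cvx: "convex_on UNIV F"
begin

lemma continuous_F: "continuous_on UNIV F"
  using convex_on_continuous[OF open_UNIV cvx] .

lemma subadditive: "F (x + y) \<le> F x + F y"
proof -
  have "F (x + y) = F ((1 - 1/2) *\<^sub>R (2 *\<^sub>R x) + (1/2) *\<^sub>R (2 *\<^sub>R y))" by simp
  also have "\<dots> \<le> (1 - 1/2) * F (2 *\<^sub>R x) + (1/2) * F (2 *\<^sub>R y)"
    by (rule convex_onD[OF cvx]) auto
  also have "\<dots> = F x + F y" using hom by simp
  finally show ?thesis .
qed

lemma norm_bounded_by_F: obtains m where "m > 0" "\<And>y. m * norm y \<le> F y"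
proof -
  have "sphere (0::'a) 1 \<noteq> {}" by simp
  then obtain x0 where x0: "x0 \<in> sphere 0 1" "\<And>y. y \<in> sphere 0 1 \<Longrightarrow> F x0 \<le> F y"
    using continuous_attains_inf[OF compact_sphere _ continuous_on_subset[OF continuous_F]] by blast
  have "F x0 > 0" using pos x0(1) by (metis mem_sphere_0 norm_zero zero_neq_one)
  moreover have "F x0 * norm y \<le> F y" for y
  proof (cases "y = 0")
    case True then show ?thesis using F_zero by simp
  next
    case False
    have "norm y * F x0 \<le> norm y * F ((1 / norm y) *\<^sub>R y)"
      using x0(2) False by (simp add: mult_left_mono)
    also have "\<dots> = F y" using hom False by simp
    finally show ?thesis by (simp add: mult.commute)
  qed
  ultimately show ?thesis using that by blast
qed

definition annulus :: "'a set" where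
  "annulus = {y. 1/2 \<le> F y \<and> F y \<le> 1}"

lemma zero_notin_annulus: "0 \<notin> annulus"
  by (simp add: annulus_def F_zero)

lemma compact_annulus: "compact annulus"
proof -
  obtain m where m: "m > 0" "\<And>y. m * norm y \<le> F y"
    using norm_bounded_by_F by blast
  have "closed annulus"
    unfolding annulus_def
    by (intro closed_Collect_conj closed_Collect_le continuous_F continuous_on_const)
  moreover have "bounded annulus"
    unfolding bounded_iff annulus_def
  proof (intro exI[of _ "1/m"] ballI)
    fix y assume "y \<in> {y. 1/2 \<le> F y \<and> F y \<le> 1}"
    then have "m * norm y \<le> 1" using m(2)[of y] by auto
    then show "norm y \<le> 1/m" using m(1) by (simp add: field_simps mult.commute)
  qed
  ultimately show ?thesis by (simp add: compact_eq_bounded_closed)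
qed

lemma D2_bounded_on_annulus: "\<exists>K\<ge>0. \<forall>z\<in>annulus. \<forall>q. \<bar>D2 F z w q\<bar> \<le> K * norm q"
  using zero_notin_annulus
  by (intro uniform_linear_bound_on_compact compact_annulus
      continuous_on_subset[OF continuous_on_D2[OF smooth]] linear_D2[OF smooth]) auto

lemma D3_bounded_on_annulus: "\<exists>K\<ge>0. \<forall>z\<in>annulus. \<forall>q. \<bar>D3 F z w q v\<bar> \<le> K * norm q"
  using zero_notin_annulus
  by (intro uniform_linear_bound_on_compact compact_annulus
      continuous_on_subset[OF continuous_on_D3[OF smooth]] linear_D3_second[OF smooth]) auto

lemma Hessian_radial_reduction:
  assumes "x \<noteq> 0"
  shows "F x * D2 F x (x + a) q = D2 F ((1 / F x) *\<^sub>R x) a q"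
proof -
  have "F x > 0" using pos assms by blast
  have "D2 F x (x + a) q = D2 F x a q"
    using linear_add[OF linear_D2_first[OF smooth]] D2_self assms by simp
  moreover have "D2 F ((1 / F x) *\<^sub>R x) a q = F x * D2 F x a q"
    using D2_scaleR[of "1 / F x" x] \<open>F x > 0\<close> assms by simp
  ultimately show ?thesis by simp
qed

end

locale symmetric_C3_gauge = C3_gauge +
  fixes a :: 'a and S :: "'a set"
  assumes sym: "\<forall>p\<in>span S. F (p + a) = F (p - a)"
    and normal_notin_span: "a \<notin> span S"
begin

lemma F_even_shift: assumes "u \<in> span S" shows "F (u + t *\<^sub>R a) = F (u - t *\<^sub>R a)"
proof -
  have *: "F (u + t *\<^sub>R a) = F (u - t *\<^sub>R a)" if "t > 0" "u \<in> span S" for t u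
  proof -
    have "F (u + t *\<^sub>R a) = F (t *\<^sub>R ((1/t) *\<^sub>R u + a))"
      using that by (simp add: algebra_simps)
    also have "\<dots> = t * F ((1/t) *\<^sub>R u + a)"
      using hom that by blast
    also have "F ((1/t) *\<^sub>R u + a) = F ((1/t) *\<^sub>R u - a)"
      using sym that(2) by (simp add: span_scale)
    also have "t * F ((1/t) *\<^sub>R u - a) = F (t *\<^sub>R ((1/t) *\<^sub>R u - a))"
      using hom that by presburger
    also have "\<dots> = F (u - t *\<^sub>R a)"
      using that by (simp add: algebra_simps)
    finally show ?thesis .
  qed
  consider "t > 0" | "t = 0" | "- t > 0" by linarith
  then show ?thesis
    by cases (use *[of t u] *[of "- t" u] assms in auto)
qed

text \<open>F is convex and even along each line u + t a, hence minimal at t = 0.\<close>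
lemma F_le_shift: assumes "u \<in> span S" shows "F u \<le> F (u - t *\<^sub>R a)"
proof -
  have "F u = F ((1 - 1/2) *\<^sub>R (u - t *\<^sub>R a) + (1/2) *\<^sub>R (u + t *\<^sub>R a))"
    by (simp add: algebra_simps) (metis field_sum_of_halves scaleR_add_left scaleR_one)
  also have "\<dots> \<le> (1 - 1/2) * F (u - t *\<^sub>R a) + (1/2) * F (u + t *\<^sub>R a)"
    by (rule convex_onD[OF cvx]) auto
  finally show ?thesis using F_even_shift[OF assms] by simp
qed

lemma D1_normal_vanishes:
  assumes "u \<in> span S" "u \<noteq> 0"
  shows "D1 F u a = 0"
proof -
  have "((\<lambda>t::real. u + t *\<^sub>R a) has_derivative (\<lambda>h. h *\<^sub>R a)) (at 0)"
    by (intro derivative_eq_intros) auto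
  from has_derivative_compose[OF this, of F "D1 F u"]
  have plus: "((\<lambda>t. F (u + t *\<^sub>R a)) has_derivative (\<lambda>h. D1 F u (h *\<^sub>R a))) (at 0)"
    using has_derivative_D1[OF assms(2)] by simp
  have "((\<lambda>t::real. u - t *\<^sub>R a) has_derivative (\<lambda>h. - (h *\<^sub>R a))) (at 0)"
    by (intro derivative_eq_intros) auto
  from has_derivative_compose[OF this, of F "D1 F u"]
  have "((\<lambda>t. F (u - t *\<^sub>R a)) has_derivative (\<lambda>h. D1 F u (- (h *\<^sub>R a)))) (at 0)"
    using has_derivative_D1[OF assms(2)] by simp
  then have "((\<lambda>t. F (u + t *\<^sub>R a)) has_derivative (\<lambda>h. D1 F u (- (h *\<^sub>R a)))) (at 0)"
    using F_even_shift[OF assms(1)] by simp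
  from has_derivative_unique[OF plus this] have "D1 F u a = D1 F u (- a)"
    by (metis scaleR_one)
  then show ?thesis
    using linear_D1[OF smooth, of u] assms(2) by (simp add: linear_neg)
qed

text \<open>D1 F y a vanishes on span S, so its derivative in a direction q within span S does too.\<close>
lemma D2_normal_vanishes:
  assumes u: "u \<in> span S" "u \<noteq> 0" and q: "q \<in> span S"
  shows "D2 F u a q = 0"
proof -
  have "((\<lambda>t::real. u + t *\<^sub>R q) has_derivative (\<lambda>h. h *\<^sub>R q)) (at 0)"
    by (intro derivative_eq_intros) auto
  from has_derivative_compose[OF this, of "\<lambda>y. D1 F y a" "D2 F u a"]
  have "((\<lambda>t. D1 F (u + t *\<^sub>R q) a) has_derivative (\<lambda>h. D2 F u a (h *\<^sub>R q))) (at 0)"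
    using has_derivative_D2[OF u(2)] by simp
  then have "((\<lambda>t. 0) has_derivative (\<lambda>h. D2 F u a (h *\<^sub>R q))) (at 0)"
  proof (rule has_derivative_transform_within_open[where s = "{t. u + t *\<^sub>R q \<noteq> 0}"])
    show "open {t. u + t *\<^sub>R q \<noteq> 0}"
      by (intro open_Collect_neq continuous_intros)
    fix t assume "t \<in> {t. u + t *\<^sub>R q \<noteq> 0}"
    then show "D1 F (u + t *\<^sub>R q) a = 0"
      using D1_normal_vanishes u q by (simp add: span_add span_scale)
  qed (use u in simp)
  from has_derivative_unique[OF this has_derivative_const] show ?thesis
    by (metis scaleR_one)
qed

lemma shift_in_annulus:
  assumes "u \<in> span S" "1/2 \<le> F u" "F (u - s *\<^sub>R a) = 1" "0 \<le> t" "t \<le> s"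
  shows "u - t *\<^sub>R a \<in> annulus"
proof -
  have "1/2 \<le> F (u - t *\<^sub>R a)"
    using assms(2) F_le_shift[OF assms(1)] order_trans by blast
  moreover have "F (u - t *\<^sub>R a) \<le> 1"
  proof (cases "s = 0")
    case True then show ?thesis using assms by simp
  next
    case False
    then have "s > 0" using assms by simp
    have "(t/s) *\<^sub>R (u - s *\<^sub>R a) = (t/s) *\<^sub>R u - t *\<^sub>R a"
      using \<open>s > 0\<close> by (simp add: scaleR_diff_right)
    then have "u - t *\<^sub>R a = (1 - t/s) *\<^sub>R u + (t/s) *\<^sub>R (u - s *\<^sub>R a)"
      using False by (simp add: algebra_simps)
    then have "F (u - t *\<^sub>R a) \<le> (1 - t/s) * F u + (t/s) * F (u - s *\<^sub>R a)"
      using convex_onD[OF cvx, of "t/s" u "u - s *\<^sub>R a"] assms \<open>s > 0\<close> by simp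
    also have "\<dots> \<le> (1 - t/s) * 1 + (t/s) * 1"
      using F_le_shift[OF assms(1), of s] assms \<open>s > 0\<close>
      by (intro add_mono mult_left_mono) auto
    finally show ?thesis by simp
  qed
  ultimately show ?thesis by (simp add: annulus_def)
qed

text \<open>Mean value estimate along the segment from u, where the term vanishes, to u - s a.\<close>
lemma D2_normal_bound_near:
  assumes K: "\<forall>z\<in>annulus. \<forall>q. \<bar>D3 F z a q a\<bar> \<le> K * norm q"
    and u: "u \<in> span S" "1/2 \<le> F u" and q: "q \<in> span S"
    and s: "0 \<le> s" "F (u - s *\<^sub>R a) = 1"
  shows "\<bar>D2 F (u - s *\<^sub>R a) a q\<bar> \<le> K * s * norm q"
proof -
  have der: "((\<lambda>t. D2 F (u - t *\<^sub>R a) a q) has_field_derivative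
              - D3 F (u - t *\<^sub>R a) a q a) (at t within {0..s})" if "t \<in> {0..s}" for t
  proof -
    have z: "u - t *\<^sub>R a \<noteq> 0"
      using shift_in_annulus[OF u s(2)] that zero_notin_annulus by fastforce
    have "((\<lambda>t::real. u - t *\<^sub>R a) has_derivative (\<lambda>h. - (h *\<^sub>R a))) (at t)"
      by (intro derivative_eq_intros) auto
    from has_derivative_compose[OF this C3_on_has_derivative_D3[OF smooth]]
    have "((\<lambda>t. D2 F (u - t *\<^sub>R a) a q) has_derivative
           (\<lambda>h. D3 F (u - t *\<^sub>R a) a q (- (h *\<^sub>R a)))) (at t)"
      using z by simp
    moreover have "(\<lambda>h. D3 F (u - t *\<^sub>R a) a q (- (h *\<^sub>R a))) = (*) (- D3 F (u - t *\<^sub>R a) a q a)"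
      using has_derivative_linear[OF C3_on_has_derivative_D3[OF smooth]] z
      by (auto simp: linear_neg linear_scale)
    ultimately show ?thesis
      unfolding has_field_derivative_def by (simp add: has_derivative_at_withinI)
  qed
  have "u \<noteq> 0" using u(2) F_zero by auto
  then have "D2 F (u - 0 *\<^sub>R a) a q = 0"
    using D2_normal_vanishes u q by simp
  moreover have "norm (D2 F (u - s *\<^sub>R a) a q - D2 F (u - 0 *\<^sub>R a) a q) \<le> (K * norm q) * norm (s - 0)"
    by (rule field_differentiable_bound[OF convex_real_interval(5) der])
       (use K shift_in_annulus[OF u s(2)] s in auto)
  ultimately show ?thesis using s by (simp add: mult.commute mult.left_commute)
qed

lemma D2_normal_bound:
  obtains C where "C \<ge> 0" "\<And>u q s. u \<in> span S \<Longrightarrow> q \<in> span S \<Longrightarrow> s > 0 \<Longrightarrow> F (u - s *\<^sub>R a) = 1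
    \<Longrightarrow> \<bar>D2 F (u - s *\<^sub>R a) a q\<bar> \<le> C * s * norm q"
proof -
  obtain K2 where K2: "K2 \<ge> 0" "\<forall>z\<in>annulus. \<forall>q. \<bar>D2 F z a q\<bar> \<le> K2 * norm q"
    using D2_bounded_on_annulus by blast
  obtain K3 where K3: "K3 \<ge> 0" "\<forall>z\<in>annulus. \<forall>q. \<bar>D3 F z a q a\<bar> \<le> K3 * norm q"
    using D3_bounded_on_annulus by blast
  have "F (- a) > 0"
    using pos normal_notin_span span_zero by (metis neg_equal_0_iff_equal)
  have "\<bar>D2 F (u - s *\<^sub>R a) a q\<bar> \<le> (2 * F (- a) * K2 + K3) * s * norm q"
    if u: "u \<in> span S" and q: "q \<in> span S" and s: "s > 0" "F (u - s *\<^sub>R a) = 1" for u q s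
  proof (cases "1/2 \<le> F u")
    case True
    then have "\<bar>D2 F (u - s *\<^sub>R a) a q\<bar> \<le> K3 * s * norm q"
      using D2_normal_bound_near[OF K3(2) u True q] s by simp
    also have "\<dots> \<le> (2 * F (- a) * K2 + K3) * s * norm q"
      using K2(1) \<open>F (- a) > 0\<close> s by (intro mult_right_mono) auto
    finally show ?thesis .
  next
    case False
    \<comment> \<open>Far from span S the scale s is bounded below.\<close>
    have "1 \<le> F u + F (s *\<^sub>R (- a))"
      using subadditive[of u "s *\<^sub>R (- a)"] s(2) by (simp add: scaleR_right.minus)
    moreover have "F (s *\<^sub>R (- a)) = s * F (- a)"
      using hom s(1) by blast
    ultimately have far: "1 \<le> 2 * s * F (- a)"
      using False by linarith
    have "u - s *\<^sub>R a \<in> annulus" using s by (simp add: annulus_def)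
    then have "\<bar>D2 F (u - s *\<^sub>R a) a q\<bar> \<le> K2 * norm q" using K2(2) by blast
    also have "\<dots> \<le> (2 * s * F (- a)) * (K2 * norm q)"
      using mult_right_mono[OF far, of "K2 * norm q"] K2(1) by simp
    also have "\<dots> \<le> (2 * F (- a) * K2 + K3) * s * norm q"
      using K3(1) s by (simp add: algebra_simps)
    finally show ?thesis .
  qed
  moreover have "2 * F (- a) * K2 + K3 \<ge> 0"
    using K2(1) K3(1) \<open>F (- a) > 0\<close> by simp
  ultimately show ?thesis using that by blast
qed

theorem Hessian_bound:
  "\<exists>C2. \<forall>p\<in>span S. \<forall>q\<in>span S. F (p - a) * D2 F (p - a) p q \<le> C2 * F q / F (p - a)"
proof -
  obtain C where C: "C \<ge> 0" "\<And>u q s. u \<in> span S \<Longrightarrow> q \<in> span S \<Longrightarrow> s > 0 \<Longrightarrow> F (u - s *\<^sub>R a) = 1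
    \<Longrightarrow> \<bar>D2 F (u - s *\<^sub>R a) a q\<bar> \<le> C * s * norm q"
    using D2_normal_bound by blast
  obtain m where m: "m > 0" "\<And>y. m * norm y \<le> F y"
    using norm_bounded_by_F by blast
  have "F (p - a) * D2 F (p - a) p q \<le> C / m * F q / F (p - a)"
    if p: "p \<in> span S" and q: "q \<in> span S" for p q
  proof -
    define x where "x = p - a"
    define s where "s = 1 / F x"
    have "x \<noteq> 0" using p normal_notin_span by (auto simp: x_def)
    then have "F x > 0" using pos by blast
    have "F x * D2 F x p q = D2 F (s *\<^sub>R p - s *\<^sub>R a) a q"
      using Hessian_radial_reduction[OF \<open>x \<noteq> 0\<close>, of a q]
      by (simp add: x_def s_def scaleR_diff_right)
    also have "\<dots> \<le> C * s * norm q"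
      using C(2)[of "s *\<^sub>R p" q s] p q \<open>F x > 0\<close> hom
      by (simp add: s_def span_scale x_def scaleR_diff_right[symmetric])
    also have "\<dots> \<le> C / m * F q / F x"
      using mult_left_mono[OF m(2)[of q] C(1)] m(1) \<open>F x > 0\<close>
      by (simp add: s_def field_simps)
    finally show ?thesis by (simp add: x_def)
  qed
  then show ?thesis by blast
qed

end

theorem lemma6:
  fixes F :: "'a::euclidean_space \<Rightarrow> real"
    and phi :: "nat \<Rightarrow> 'a"
    and n :: nat
  assumes dim: "DIM('a) = n + 1"
    and basis_inj: "inj_on phi {0..n}"
    and basis_indep: "independent (phi ` {0..n})"
    and pos: "\<forall>x. x \<noteq> 0 \<longrightarrow> F x > 0"
    and cvx: "convex_on UNIV F"
    and smooth: "C3_on (UNIV - {0}) F"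
    and hom: "\<forall>t x. t > 0 \<longrightarrow> F (t *\<^sub>R x) = t * F x"
    and unif: "\<forall>t>0. uniformly_convex_set {x. F x \<le> t}"
    and sym: "\<forall>p\<in>span (phi ` {1..n}). F (p + phi 0) = F (p - phi 0)"
  shows "\<exists>C2. \<forall>p\<in>span (phi ` {1..n}). \<forall>q\<in>span (phi ` {1..n}).
           F (p - phi 0) * D2 F (p - phi 0) p q \<le> C2 * F q / F (p - phi 0)"
proof -
  have "{0..n} = insert 0 {1..n}" by auto
  moreover have "phi 0 \<notin> phi ` {1..n}"
    using inj_on_image_mem_iff[OF basis_inj, of 0 "{1..n}"] by simp
  ultimately have "phi 0 \<notin> span (phi ` {1..n})"
    using basis_indep by (simp add: independent_insert)
  then interpret symmetric_C3_gauge F "phi 0" "phi ` {1..n}"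
    using smooth hom pos cvx sym by unfold_locales
  show ?thesis by (rule Hessian_bound)
qed

end
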